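(* Let $\lambda$ be a singular cardinal of cofinality $\kappa$ and $\vec\lambda=\langle\lambda_i:i<\kappa\rangle$ a strictly increasing sequence of regular cardinals converging to $\lambda$. Then $\mathbb G(\vec\lambda)$ is $\kappa^+$-directed closed.
   Context: For $f,g:\kappa\to\mathrm{ON}$, $f<^*g$ means there is $j<\kappa$ with $f(i)<g(i)$ for all $i\ge j$. Given a $<^*$-increasing sequence $\langle f_\gamma:\gamma<\beta\rangle$ in $\prod_{i<\kappa}\lambda_i$, $\beta$ is a good point if there are an unbounded $A\subseteq\beta$ of order type $\mathrm{cf}(\beta)$ and $j<\kappa$ such that for all $i\ge j$, $\langle f_\gamma(i):\gamma\in A\rangle$ is strictly increasing. $\mathbb G(\vec\lambda)$ consists of sequences $\langle f_\beta:\beta\le\alpha\rangle$ with $\alpha<\lambda^+$ such that for all $\beta\le\alpha$: $f_\beta\in\prod_{i<\kappa}\lambda_i$; $f_\gamma<^*f_\beta$ for all $\gamma<\beta$; and if $\mathrm{cf}(\beta)>\kappa$ then $\beta$ is a good point of $\langle f_\gamma:\gamma<\beta\rangle$. The order is end-extension: $p\le q$ iff $p\upharpoonright\mathrm{dom}(q)=q$. *)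

theory Defs
  imports Main "HOL-Library.Equipollence" "HOL-Library.FuncSet"
begin

text \<open>Ordinals are represented by the elements of a well-ordered type 'o
  (every such type is order-isomorphic to an ordinal); the ordinal x is
  identified with its set of predecessors.\<close>

definition below :: "'o::wellorder \<Rightarrow> 'o set" where
  "below x = {y. y < x}"

definition ordertype_is :: "'o::wellorder set \<Rightarrow> 'o \<Rightarrow> bool" where
  "ordertype_is A g \<longleftrightarrow> (\<exists>f. bij_betw f (below g) A \<and> strict_mono_on (below g) f)"

definition unbounded_in :: "'o::wellorder set \<Rightarrow> 'o \<Rightarrow> bool" where
  "unbounded_in A b \<longleftrightarrow> A \<subseteq> below b \<and> (\<forall>x<b. \<exists>a\<in>A. x \<le> a)"

definition cf :: "'o::wellorder \<Rightarrow> 'o" where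
  "cf b = (LEAST g. \<exists>A. unbounded_in A b \<and> ordertype_is A g)"

definition is_cardinal :: "'o::wellorder \<Rightarrow> bool" where
  "is_cardinal x \<longleftrightarrow> (\<forall>y<x. below y \<prec> below x)"

definition regular_cardinal :: "'o::wellorder \<Rightarrow> bool" where
  "regular_cardinal x \<longleftrightarrow> is_cardinal x \<and> infinite (below x) \<and> cf x = x"

definition singular_cardinal :: "'o::wellorder \<Rightarrow> bool" where
  "singular_cardinal x \<longleftrightarrow> is_cardinal x \<and> infinite (below x) \<and> cf x < x"

definition lt_star :: "'o::wellorder \<Rightarrow> ('o \<Rightarrow> 'o) \<Rightarrow> ('o \<Rightarrow> 'o) \<Rightarrow> bool" where
  "lt_star \<kappa> f g \<longleftrightarrow> (\<exists>j<\<kappa>. \<forall>i. j \<le> i \<and> i < \<kappa> \<longrightarrow> f i < g i)"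

definition good_point :: "'o::wellorder \<Rightarrow> ('o \<Rightarrow> 'o \<Rightarrow> 'o) \<Rightarrow> 'o \<Rightarrow> bool" where
  "good_point \<kappa> F b \<longleftrightarrow>
     (\<exists>A j. unbounded_in A b \<and> ordertype_is A (cf b) \<and> j < \<kappa> \<and>
        (\<forall>i. j \<le> i \<and> i < \<kappa> \<longrightarrow>
           (\<forall>g\<in>A. \<forall>g'\<in>A. g < g' \<longrightarrow> F g i < F g' i)))"

text \<open>The forcing G(lambda-vector): a condition is a partial map with
  domain {beta. beta \<le> alpha}, alpha < lambda^+ (i.e. |alpha| \<le> lambda).\<close>
definition Gforce :: "'o::wellorder \<Rightarrow> 'o \<Rightarrow> ('o \<Rightarrow> 'o) \<Rightarrow> ('o \<rightharpoonup> ('o \<Rightarrow> 'o)) set" where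
  "Gforce lmb \<kappa> lam =
    {p. \<exists>\<alpha>. below \<alpha> \<lesssim> below lmb \<and> dom p = {\<beta>. \<beta> \<le> \<alpha>} \<and>
        (\<forall>\<beta>\<le>\<alpha>.
           the (p \<beta>) \<in> (\<Pi>\<^sub>E i\<in>below \<kappa>. below (lam i)) \<and>
           (\<forall>\<gamma><\<beta>. lt_star \<kappa> (the (p \<gamma>)) (the (p \<beta>))) \<and>
           (\<kappa> < cf \<beta> \<longrightarrow> good_point \<kappa> (\<lambda>\<gamma>. the (p \<gamma>)) \<beta>))}"

text \<open>Forcing order: p \<le> q iff p end-extends q.\<close>
definition ext_le :: "('o \<rightharpoonup> 'b) \<Rightarrow> ('o \<rightharpoonup> 'b) \<Rightarrow> bool" where
  "ext_le p q \<longleftrightarrow> (p |` dom q) = q"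

text \<open>P is mu-directed closed, with mu = kappa^+: every directed D \<subseteq> P with
  |D| < kappa^+ (i.e. |D| \<le> kappa) has a lower bound in P.\<close>
definition kappa_plus_directed_closed :: "'o::wellorder \<Rightarrow> ('o \<rightharpoonup> 'b) set \<Rightarrow> bool" where
  "kappa_plus_directed_closed \<kappa> P \<longleftrightarrow>
    (\<forall>D. D \<subseteq> P \<and> D \<lesssim> below \<kappa> \<and>
         (\<forall>p\<in>D. \<forall>q\<in>D. \<exists>r\<in>D. ext_le r p \<and> ext_le r q)
       \<longrightarrow> (\<exists>r\<in>P. \<forall>p\<in>D. ext_le r p))"

end

theory Submission imports Defs begin

text \<open>A directed family D of at most \<kappa> conditions is pairwise compatible, so its members
  are initial segments of a single sequence of length \<delta>, the supremum of their lengths.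
  Since |D| \<le> \<kappa>, cf \<delta> \<le> \<kappa>, so no good point is required at \<delta>, and |\<delta>| \<le> \<lambda>.
  At every coordinate i with lam i > \<kappa>, regularity of lam i bounds the at most \<kappa> last
  functions of the members of D; this yields f lying <*-above all of them, and appending
  f at \<delta> gives a lower bound of D in the forcing.\<close>

section \<open>Order types and cofinality\<close>

definition strict_sup :: "'o::wellorder set \<Rightarrow> 'o" where
  "strict_sup T = (LEAST z. \<forall>t\<in>T. t < z)"

lemma less_strict_sup:
  assumes "\<forall>t\<in>T. t < x"
  shows "\<forall>t\<in>T. t < strict_sup T"
  unfolding strict_sup_def by (rule LeastI[of _ x]) (rule assms)

lemma less_strict_supD: "z < strict_sup T \<Longrightarrow> \<exists>t\<in>T. z \<le> t"
  using Least_le[of "\<lambda>z. \<forall>t\<in>T. t < z" z] unfolding strict_sup_def by (meson not_le)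

lemma strict_sup_le: "\<forall>t\<in>T. t < x \<Longrightarrow> strict_sup T \<le> x"
  unfolding strict_sup_def by (rule Least_le)

text \<open>collapse X x is the order type of X \<inter> below x (the Mostowski collapse of X).\<close>

definition collapse :: "'o::wellorder set \<Rightarrow> 'o \<Rightarrow> 'o" where
  "collapse X = wfrec {(x, y). x < y} (\<lambda>c x. LEAST z. \<forall>y\<in>X. y < x \<longrightarrow> c y < z)"

lemma collapse_eq: "collapse X x = (LEAST z. \<forall>y\<in>X. y < x \<longrightarrow> collapse X y < z)"
  unfolding collapse_def by (subst wfrec[OF wf]) (simp add: cut_apply collapse_def[symmetric])

lemma collapse_le: "collapse X x \<le> x"
proof (induction x rule: less_induct)
  case (less x)
  show ?case
    unfolding collapse_eq[of X x] by (rule Least_le) (use less in force)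
qed

lemma collapse_less:
  assumes "y \<in> X" and "y < x"
  shows "collapse X y < collapse X x"
proof -
  have "\<forall>y\<in>X. y < x \<longrightarrow> collapse X y < collapse X x"
    unfolding collapse_eq[of X x]
    by (rule LeastI[of _ x]) (use collapse_le le_less_trans in blast)
  with assms show ?thesis by blast
qed

lemma less_collapseD: "z < collapse X x \<Longrightarrow> \<exists>y\<in>X. y < x \<and> collapse X y = z"
proof (induction x arbitrary: z rule: less_induct)
  case (less x)
  have "\<not> (\<forall>y\<in>X. y < x \<longrightarrow> collapse X y < z)"
  proof
    assume "\<forall>y\<in>X. y < x \<longrightarrow> collapse X y < z"
    then have "collapse X x \<le> z" unfolding collapse_eq[of X x] by (rule Least_le)
    with less.prems show False by simp
  qed
  then obtain y where y: "y \<in> X" "y < x" "z \<le> collapse X y" by force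
  show ?case
  proof (cases "z = collapse X y")
    case False
    with y less.IH[of y z] show ?thesis by (metis le_neq_trans less_trans)
  qed (use y in blast)
qed

lemma strict_mono_on_inv_into:
  fixes f :: "'a::linorder \<Rightarrow> 'b::linorder"
  assumes "strict_mono_on A f"
  shows "strict_mono_on (f ` A) (inv_into A f)"
proof (rule strict_mono_onI)
  fix a b assume ab: "a \<in> f ` A" "b \<in> f ` A" "a < b"
  show "inv_into A f a < inv_into A f b"
  proof (rule ccontr)
    assume "\<not> ?thesis"
    then have "f (inv_into A f b) \<le> f (inv_into A f a)"
      using assms ab by (auto simp: not_less order_le_less intro: strict_mono_onD inv_into_into)
    with ab show False by (simp add: f_inv_into_f)
  qed
qed

lemma ex_ordertype_le:
  assumes "X \<subseteq> below k"
  shows "\<exists>g\<le>k. ordertype_is X g"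
proof -
  define g where "g = strict_sup (collapse X ` X)"
  have below_k: "\<forall>t\<in>collapse X ` X. t < k"
    using assms collapse_le le_less_trans unfolding below_def by blast
  then have "g \<le> k" unfolding g_def by (rule strict_sup_le)
  have below_g: "\<forall>t\<in>collapse X ` X. t < g" unfolding g_def by (rule less_strict_sup[OF below_k])
  have mono: "strict_mono_on X (collapse X)"
    by (rule strict_mono_onI) (rule collapse_less)
  have "collapse X ` X = below g"
  proof
    show "collapse X ` X \<subseteq> below g" using below_g unfolding below_def by blast
    show "below g \<subseteq> collapse X ` X"
    proof
      fix z assume "z \<in> below g"
      then obtain x where x: "x \<in> X" "z \<le> collapse X x"
        using less_strict_supD unfolding below_def g_def by blast
      then show "z \<in> collapse X ` X"
        using less_collapseD[of z X x] by (cases "z = collapse X x") (auto dest: le_neq_trans)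
    qed
  qed
  then have "bij_betw (inv_into X (collapse X)) (below g) X"
    "strict_mono_on (below g) (inv_into X (collapse X))"
    using strict_mono_on_inv_into[OF mono] strict_mono_on_imp_inj_on[OF mono]
    by (metis bij_betw_def bij_betw_inv_into)+
  with \<open>g \<le> k\<close> show ?thesis unfolding ordertype_is_def by blast
qed

lemma ordertype_is_image:
  assumes "ordertype_is R g" and "strict_mono_on R s"
  shows "ordertype_is (s ` R) g"
proof -
  obtain e where e: "bij_betw e (below g) R" "strict_mono_on (below g) e"
    using assms(1) unfolding ordertype_is_def by blast
  have "bij_betw (s \<circ> e) (below g) (s ` R)"
    using e(1) strict_mono_on_imp_inj_on[OF assms(2)] by (meson bij_betw_imageI bij_betw_trans)
  moreover have "strict_mono_on (below g) (s \<circ> e)"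
    using e assms(2) by (intro strict_mono_onI) (simp add: bij_betwE strict_mono_onD)
  ultimately show ?thesis unfolding ordertype_is_def by blast
qed

lemma cf_le_ordertype: "unbounded_in A b \<Longrightarrow> ordertype_is A g \<Longrightarrow> cf b \<le> g"
  unfolding cf_def by (rule Least_le) blast

text \<open>Enumerate Y along an injection into k and keep only the indices at which a new
  maximum is reached: these records form a cofinal subset of order type at most k.\<close>

lemma cf_le_lepoll:
  assumes Y: "unbounded_in Y b" and "Y \<lesssim> below k"
  shows "cf b \<le> k"
proof -
  obtain h where h: "inj_on h Y" "h ` Y \<subseteq> below k"
    using assms(2) unfolding lepoll_def by blast
  define K where "K = h ` Y"
  define s where "s = inv_into Y h"
  have sK: "s \<xi> \<in> Y" if "\<xi> \<in> K" for \<xi> using that unfolding s_def K_def by (auto intro: inv_into_into)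
  define R where "R = {\<xi>\<in>K. \<forall>\<eta>\<in>K. \<eta> < \<xi> \<longrightarrow> s \<eta> < s \<xi>}"
  have "R \<subseteq> below k" using h unfolding R_def K_def by auto
  then obtain g where "g \<le> k" "ordertype_is R g" using ex_ordertype_le by blast
  have "strict_mono_on R s" by (rule strict_mono_onI) (auto simp: R_def)
  have "unbounded_in (s ` R) b"
    unfolding unbounded_in_def
  proof
    show "s ` R \<subseteq> below b" using Y sK unfolding unbounded_in_def R_def by blast
    show "\<forall>x<b. \<exists>a\<in>s ` R. x \<le> a"
    proof (intro allI impI)
      fix x assume "x < b"
      then obtain y where y: "y \<in> Y" "x \<le> y" using Y unfolding unbounded_in_def by blast
      define \<xi> where "\<xi> = (LEAST \<xi>. \<xi> \<in> K \<and> x \<le> s \<xi>)"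
      have "h y \<in> K \<and> x \<le> s (h y)" using y h(1) unfolding K_def s_def by auto
      then have \<xi>: "\<xi> \<in> K \<and> x \<le> s \<xi>" unfolding \<xi>_def by (rule LeastI)
      have "s \<eta> < s \<xi>" if "\<eta> \<in> K" "\<eta> < \<xi>" for \<eta>
        using not_less_Least[of \<eta> "\<lambda>\<xi>. \<xi> \<in> K \<and> x \<le> s \<xi>"] that \<xi>
        unfolding \<xi>_def by (meson le_less_trans not_le)
      with \<xi> have "\<xi> \<in> R" unfolding R_def by blast
      with \<xi> show "\<exists>a\<in>s ` R. x \<le> a" by blast
    qed
  qed
  then have "cf b \<le> g"
    using cf_le_ordertype ordertype_is_image \<open>ordertype_is R g\<close> \<open>strict_mono_on R s\<close> by blast
  with \<open>g \<le> k\<close> show ?thesis by simp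
qed

lemma regular_cardinal_bounded:
  assumes "regular_cardinal \<mu>" and "Y \<subseteq> below \<mu>" and "Y \<lesssim> below k" and "k < \<mu>"
  shows "\<exists>y<\<mu>. \<forall>x\<in>Y. x < y"
proof (rule ccontr)
  assume "\<not> ?thesis"
  then have "unbounded_in Y \<mu>"
    using assms(2) unfolding unbounded_in_def by (meson not_le)
  then have "cf \<mu> \<le> k" using assms(3) by (rule cf_le_lepoll)
  with assms(1,4) show False unfolding regular_cardinal_def by simp
qed

lemma cf_strict_sup_le:
  assumes "\<forall>t\<in>T. t < x" and "T \<lesssim> below k"
  shows "cf (strict_sup T) \<le> k"
proof (rule cf_le_lepoll[OF _ assms(2)])
  show "unbounded_in T (strict_sup T)"
    using less_strict_sup[OF assms(1)] less_strict_supD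
    unfolding unbounded_in_def below_def by blast
qed

lemma lepoll_iff_card_of_ordLeq: "A \<lesssim> B \<longleftrightarrow> (card_of A, card_of B) \<in> ordLeq"
  unfolding lepoll_def by (rule card_of_ordLeq)

lemma lepoll_UN_infinite:
  assumes "infinite B" and "I \<lesssim> B" and "\<forall>i\<in>I. A i \<lesssim> B"
  shows "(\<Union>i\<in>I. A i) \<lesssim> B"
  using assms unfolding lepoll_iff_card_of_ordLeq by (intro card_of_UNION_ordLeq_infinite) auto

lemma below_strict_sup_lepoll:
  assumes "infinite B" and "T \<lesssim> B" and "\<forall>t\<in>T. below t \<lesssim> B"
  shows "below (strict_sup T) \<lesssim> B"
proof -
  have sub: "below (strict_sup T) \<subseteq> (\<Union>t\<in>T. insert t (below t))"
  proof
    fix x assume "x \<in> below (strict_sup T)"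
    then obtain t where "t \<in> T" "x \<le> t" using less_strict_supD unfolding below_def by blast
    then show "x \<in> (\<Union>t\<in>T. insert t (below t))" unfolding below_def by (auto simp: order_le_less)
  qed
  have "\<forall>t\<in>T. insert t (below t) \<lesssim> B"
  proof
    fix t assume "t \<in> T"
    show "insert t (below t) \<lesssim> B"
    proof (cases "finite (below t)")
      case True
      then show ?thesis using finite_lepoll_infinite[OF assms(1), of "insert t (below t)"] by simp
    next
      case False
      then have "insert t (below t) \<lesssim> below t" by (rule infinite_insert_lepoll)
      then show ?thesis using assms(3) \<open>t \<in> T\<close> by (meson lepoll_trans)
    qed
  qed
  then have "(\<Union>t\<in>T. insert t (below t)) \<lesssim> B" by (rule lepoll_UN_infinite[OF assms(1,2)])
  with sub show ?thesis by (meson lepoll_trans subset_imp_lepoll)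
qed

lemma less_if_below_lepoll_lesspoll:
  assumes "below a \<lesssim> below m" and "below m \<prec> below x"
  shows "a < x"
proof (rule ccontr)
  assume "\<not> a < x"
  then have "below x \<subseteq> below a" unfolding below_def by auto
  then have "below x \<lesssim> below m" using assms(1) by (meson lepoll_trans subset_imp_lepoll)
  with assms(2) show False unfolding lesspoll_def by (meson lepoll_antisym)
qed

section \<open>Eventual domination and good points\<close>

lemma lt_star_trans:
  assumes "lt_star k f g" and "lt_star k g h"
  shows "lt_star k f h"
proof -
  obtain j1 j2 where "j1 < k" "\<forall>i. j1 \<le> i \<and> i < k \<longrightarrow> f i < g i"
    "j2 < k" "\<forall>i. j2 \<le> i \<and> i < k \<longrightarrow> g i < h i"
    using assms unfolding lt_star_def by blast
  then show ?thesis
    unfolding lt_star_def by (intro exI[of _ "max j1 j2"]) (auto intro: less_trans)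
qed

lemma good_point_cong:
  assumes "\<And>\<gamma>. \<gamma> < b \<Longrightarrow> F \<gamma> = G \<gamma>" and "good_point k F b"
  shows "good_point k G b"
proof -
  obtain A j where A: "unbounded_in A b" "ordertype_is A (cf b)" "j < k"
    "\<forall>i. j \<le> i \<and> i < k \<longrightarrow> (\<forall>g\<in>A. \<forall>g'\<in>A. g < g' \<longrightarrow> F g i < F g' i)"
    using assms(2) unfolding good_point_def by blast
  have "\<forall>g\<in>A. F g = G g" using A(1) assms(1) unfolding unbounded_in_def below_def by blast
  with A show ?thesis unfolding good_point_def by (intro exI[of _ A] exI[of _ j]) auto
qed

lemma ex_lt_star_upper_bound:
  assumes F: "F \<subseteq> (\<Pi>\<^sub>E i\<in>below \<kappa>. below (lam i))" "F \<lesssim> below \<kappa>"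
    and reg: "\<forall>i<\<kappa>. regular_cardinal (lam i)"
    and j: "j < \<kappa>" "\<forall>i. j \<le> i \<and> i < \<kappa> \<longrightarrow> \<kappa> < lam i"
  shows "\<exists>f\<in>(\<Pi>\<^sub>E i\<in>below \<kappa>. below (lam i)). \<forall>h\<in>F. lt_star \<kappa> h f"
proof -
  have "\<exists>y. y < lam i \<and> (\<kappa> < lam i \<longrightarrow> (\<forall>h\<in>F. h i < y))" if i: "i < \<kappa>" for i
  proof (cases "\<kappa> < lam i")
    case True
    have "(\<lambda>h. h i) ` F \<subseteq> below (lam i)"
      using F(1) i by (auto simp: below_def dest!: subsetD)
    moreover have "(\<lambda>h. h i) ` F \<lesssim> below \<kappa>" by (rule lepoll_trans[OF image_lepoll F(2)])
    ultimately obtain y where "y < lam i" "\<forall>x\<in>(\<lambda>h. h i) ` F. x < y"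
      using regular_cardinal_bounded[OF reg[rule_format, OF i] _ _ True] by blast
    then show ?thesis by auto
  next
    case False
    have "below (lam i) \<noteq> {}"
      using reg i unfolding regular_cardinal_def by (metis finite.emptyI)
    with False show ?thesis unfolding below_def by blast
  qed
  then obtain g where g: "\<And>i. i < \<kappa> \<Longrightarrow> g i < lam i \<and> (\<kappa> < lam i \<longrightarrow> (\<forall>h\<in>F. h i < g i))"
    by metis
  have "restrict g (below \<kappa>) \<in> (\<Pi>\<^sub>E i\<in>below \<kappa>. below (lam i))"
    using g by (simp add: below_def)
  moreover have "lt_star \<kappa> h (restrict g (below \<kappa>))" if "h \<in> F" for h
    unfolding lt_star_def using j g that by (intro exI[of _ j]) (auto simp: below_def)
  ultimately show ?thesis by blast
qed

section \<open>Gluing compatible conditions\<close>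

definition compatible_maps :: "('a \<rightharpoonup> 'b) set \<Rightarrow> bool" where
  "compatible_maps D \<longleftrightarrow> (\<forall>p\<in>D. \<forall>q\<in>D. \<forall>x\<in>dom p \<inter> dom q. p x = q x)"

lemma compatible_maps_if_directed:
  assumes "\<forall>p\<in>D. \<forall>q\<in>D. \<exists>r\<in>D. ext_le r p \<and> ext_le r q"
  shows "compatible_maps D"
  unfolding compatible_maps_def
proof (intro ballI)
  fix p q x assume pq: "p \<in> D" "q \<in> D" and x: "x \<in> dom p \<inter> dom q"
  then obtain r where "ext_le r p" "ext_le r q" using assms by blast
  then have "p x = (r |` dom p) x" "q x = (r |` dom q) x" unfolding ext_le_def by simp_all
  with x show "p x = q x" by simp
qed

text \<open>The member of D chosen by SOME is immaterial once D is compatible.\<close>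

definition glue :: "('o::wellorder \<rightharpoonup> 'b) set \<Rightarrow> 'o \<Rightarrow> 'b \<Rightarrow> 'o \<rightharpoonup> 'b" where
  "glue D \<delta> f \<beta> =
    (if \<beta> < \<delta> then (SOME p. p \<in> D \<and> \<beta> \<in> dom p) \<beta> else if \<beta> = \<delta> then Some f else None)"

lemma glue_eq:
  assumes "compatible_maps D" and "p \<in> D" and "\<beta> \<in> dom p" and "\<beta> < \<delta>"
  shows "glue D \<delta> f \<beta> = p \<beta>"
proof -
  have "\<exists>p. p \<in> D \<and> \<beta> \<in> dom p" using assms by blast
  then have "(SOME p. p \<in> D \<and> \<beta> \<in> dom p) \<in> D \<and> \<beta> \<in> dom (SOME p. p \<in> D \<and> \<beta> \<in> dom p)"
    by (rule someI_ex)
  with assms show ?thesis unfolding glue_def compatible_maps_def by auto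
qed

lemma glue_at: "glue D \<delta> f \<delta> = Some f"
  by (simp add: glue_def)

lemma dom_glue:
  assumes "\<forall>\<beta><\<delta>. \<exists>p\<in>D. \<beta> \<in> dom p"
  shows "dom (glue D \<delta> f) = {\<beta>. \<beta> \<le> \<delta>}"
proof (intro set_eqI iffI)
  fix \<beta> assume "\<beta> \<in> {\<beta>. \<beta> \<le> \<delta>}"
  then consider "\<beta> < \<delta>" | "\<beta> = \<delta>" by fastforce
  then show "\<beta> \<in> dom (glue D \<delta> f)"
  proof cases
    case 1
    then have "\<exists>p. p \<in> D \<and> \<beta> \<in> dom p" using assms by blast
    then have "\<beta> \<in> dom (SOME p. p \<in> D \<and> \<beta> \<in> dom p)" by (metis (mono_tags, lifting) someI_ex)
    with 1 show ?thesis by (simp add: glue_def dom_def)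
  qed (simp add: glue_at dom_def)
qed (auto simp: glue_def dom_def split: if_splits)

lemma ext_le_glue:
  assumes "compatible_maps D" and "p \<in> D" and "dom p \<subseteq> below \<delta>"
  shows "ext_le (glue D \<delta> f) p"
  unfolding ext_le_def
proof
  fix \<beta>
  show "(glue D \<delta> f |` dom p) \<beta> = p \<beta>"
  proof (cases "\<beta> \<in> dom p")
    case True
    with assms(3) have "\<beta> < \<delta>" unfolding below_def by blast
    with True show ?thesis using glue_eq[OF assms(1,2) True] by simp
  qed (simp add: domIff)
qed

definition last_index :: "('o::wellorder \<rightharpoonup> 'b) \<Rightarrow> 'o" where
  "last_index p = (THE \<alpha>. dom p = {\<beta>. \<beta> \<le> \<alpha>})"

lemma last_index_eq: "dom p = {\<beta>. \<beta> \<le> \<alpha>} \<Longrightarrow> last_index p = \<alpha>"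
  unfolding last_index_def by (rule the_equality) (auto intro: antisym simp: set_eq_iff)

lemma GforceD:
  assumes "p \<in> Gforce lmb \<kappa> lam"
  shows "below (last_index p) \<lesssim> below lmb"
    and "dom p = {\<beta>. \<beta> \<le> last_index p}"
    and "\<beta> \<le> last_index p \<Longrightarrow> the (p \<beta>) \<in> (\<Pi>\<^sub>E i\<in>below \<kappa>. below (lam i))"
    and "\<beta> \<le> last_index p \<Longrightarrow> \<gamma> < \<beta> \<Longrightarrow> lt_star \<kappa> (the (p \<gamma>)) (the (p \<beta>))"
    and "\<beta> \<le> last_index p \<Longrightarrow> \<kappa> < cf \<beta> \<Longrightarrow> good_point \<kappa> (\<lambda>\<gamma>. the (p \<gamma>)) \<beta>"
proof -
  obtain \<alpha> where \<alpha>: "below \<alpha> \<lesssim> below lmb" "dom p = {\<beta>. \<beta> \<le> \<alpha>}"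
    "\<forall>\<beta>\<le>\<alpha>. the (p \<beta>) \<in> (\<Pi>\<^sub>E i\<in>below \<kappa>. below (lam i)) \<and>
       (\<forall>\<gamma><\<beta>. lt_star \<kappa> (the (p \<gamma>)) (the (p \<beta>))) \<and>
       (\<kappa> < cf \<beta> \<longrightarrow> good_point \<kappa> (\<lambda>\<gamma>. the (p \<gamma>)) \<beta>)"
    using assms unfolding Gforce_def by blast
  moreover have "last_index p = \<alpha>" using \<alpha>(2) by (rule last_index_eq)
  ultimately show "below (last_index p) \<lesssim> below lmb" "dom p = {\<beta>. \<beta> \<le> last_index p}"
    "\<beta> \<le> last_index p \<Longrightarrow> the (p \<beta>) \<in> (\<Pi>\<^sub>E i\<in>below \<kappa>. below (lam i))"
    "\<beta> \<le> last_index p \<Longrightarrow> \<gamma> < \<beta> \<Longrightarrow> lt_star \<kappa> (the (p \<gamma>)) (the (p \<beta>))"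
    "\<beta> \<le> last_index p \<Longrightarrow> \<kappa> < cf \<beta> \<Longrightarrow> good_point \<kappa> (\<lambda>\<gamma>. the (p \<gamma>)) \<beta>"
    by simp_all
qed

lemma Gforce_glue:
  assumes D: "D \<subseteq> Gforce lmb \<kappa> lam" "compatible_maps D"
    and \<delta>: "\<forall>p\<in>D. last_index p < \<delta>" "\<forall>\<beta><\<delta>. \<exists>p\<in>D. \<beta> \<le> last_index p"
    and size: "below \<delta> \<lesssim> below lmb" and cf: "cf \<delta> \<le> \<kappa>"
    and f: "f \<in> (\<Pi>\<^sub>E i\<in>below \<kappa>. below (lam i))"
      "\<forall>p\<in>D. lt_star \<kappa> (the (p (last_index p))) f"
  shows "glue D \<delta> f \<in> Gforce lmb \<kappa> lam"
proof -
  let ?r = "glue D \<delta> f"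
  have dom_p: "dom p = {\<beta>. \<beta> \<le> last_index p}" if "p \<in> D" for p
    using GforceD(2) D(1) that by blast
  have agree: "?r \<gamma> = p \<gamma>" if p: "p \<in> D" and \<gamma>: "\<gamma> \<le> last_index p" for p \<gamma>
  proof (rule glue_eq[OF D(2) p])
    show "\<gamma> \<in> dom p" using dom_p[OF p] \<gamma> by simp
    show "\<gamma> < \<delta>" using \<gamma> \<delta>(1) p by (meson le_less_trans)
  qed
  have below_\<delta>: "\<exists>p\<in>D. \<beta> \<le> last_index p \<and> (\<forall>\<gamma>\<le>\<beta>. ?r \<gamma> = p \<gamma>)" if \<beta>: "\<beta> < \<delta>" for \<beta>
  proof -
    obtain p where "p \<in> D" "\<beta> \<le> last_index p" using \<delta>(2) \<beta> by blast
    moreover have "\<forall>\<gamma>\<le>\<beta>. ?r \<gamma> = p \<gamma>" using agree calculation by (meson order_trans)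
    ultimately show ?thesis by blast
  qed
  have "dom ?r = {\<beta>. \<beta> \<le> \<delta>}"
    by (rule dom_glue) (use \<delta>(2) dom_p in auto)
  moreover have "the (?r \<beta>) \<in> (\<Pi>\<^sub>E i\<in>below \<kappa>. below (lam i)) \<and>
      (\<forall>\<gamma><\<beta>. lt_star \<kappa> (the (?r \<gamma>)) (the (?r \<beta>))) \<and>
      (\<kappa> < cf \<beta> \<longrightarrow> good_point \<kappa> (\<lambda>\<gamma>. the (?r \<gamma>)) \<beta>)" if "\<beta> \<le> \<delta>" for \<beta>
  proof (cases "\<beta> = \<delta>")
    case True
    have "lt_star \<kappa> (the (?r \<gamma>)) f" if \<gamma>: "\<gamma> < \<delta>" for \<gamma>
    proof -
      obtain p where p: "p \<in> D" "\<gamma> \<le> last_index p" "\<forall>\<gamma>'\<le>\<gamma>. ?r \<gamma>' = p \<gamma>'"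
        using below_\<delta>[OF \<gamma>] by blast
      have pG: "p \<in> Gforce lmb \<kappa> lam" using D(1) p(1) by blast
      have top: "lt_star \<kappa> (the (p (last_index p))) f" using f(2) p(1) by blast
      show ?thesis
      proof (cases "\<gamma> = last_index p")
        case False
        with p(2) have "lt_star \<kappa> (the (p \<gamma>)) (the (p (last_index p)))"
          using GforceD(4)[OF pG order_refl] by simp
        with top p(3) show ?thesis using lt_star_trans by auto
      qed (use top p(3) in simp)
    qed
    \<comment> \<open>no good point is required at \<delta>, because cf \<delta> \<le> \<kappa>\<close>
    with True f(1) cf show ?thesis by (simp add: glue_at not_less[symmetric])
  next
    case False
    with that have "\<beta> < \<delta>" by simp
    then obtain p where p: "p \<in> D" "\<beta> \<le> last_index p" "\<forall>\<gamma>\<le>\<beta>. ?r \<gamma> = p \<gamma>"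
      using below_\<delta> by blast
    have pG: "p \<in> Gforce lmb \<kappa> lam" using D(1) p(1) by blast
    have "\<kappa> < cf \<beta> \<Longrightarrow> good_point \<kappa> (\<lambda>\<gamma>. the (?r \<gamma>)) \<beta>"
      by (rule good_point_cong[OF _ GforceD(5)[OF pG p(2)]]) (use p(3) in auto)
    with GforceD(3,4)[OF pG p(2)] p(3) show ?thesis by auto
  qed
  ultimately show ?thesis
    unfolding Gforce_def using size by blast
qed

lemma Gforce_lower_bound:
  fixes lmb x :: "'o::wellorder"
  assumes DG: "D \<subseteq> Gforce lmb \<kappa> lam" and compatible: "compatible_maps D"
    and D_small: "D \<lesssim> below \<kappa>" and "\<kappa> < lmb" and inf: "infinite (below lmb)"
    and big: "below lmb \<prec> below x"
    and f: "f \<in> (\<Pi>\<^sub>E i\<in>below \<kappa>. below (lam i))"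
      "\<forall>p\<in>D. lt_star \<kappa> (the (p (last_index p))) f"
  shows "\<exists>r\<in>Gforce lmb \<kappa> lam. \<forall>p\<in>D. ext_le r p"
proof -
  have indices_small: "last_index ` D \<lesssim> below \<kappa>" by (rule lepoll_trans[OF image_lepoll D_small])
  have "below \<kappa> \<subseteq> below lmb" using \<open>\<kappa> < lmb\<close> unfolding below_def by auto
  with indices_small have indices_lmb: "last_index ` D \<lesssim> below lmb"
    by (meson lepoll_trans subset_imp_lepoll)
  have bounded: "\<forall>t\<in>last_index ` D. t < x"
    using DG GforceD(1) less_if_below_lepoll_lesspoll[OF _ big] by blast
  define \<delta> where "\<delta> = strict_sup (last_index ` D)"
  have "cf \<delta> \<le> \<kappa>" unfolding \<delta>_def by (rule cf_strict_sup_le[OF bounded indices_small])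
  have "below \<delta> \<lesssim> below lmb"
    unfolding \<delta>_def by (rule below_strict_sup_lepoll[OF inf indices_lmb]) (use DG GforceD(1) in blast)
  have \<delta>_above: "\<forall>p\<in>D. last_index p < \<delta>"
    using less_strict_sup[OF bounded] unfolding \<delta>_def by blast
  have \<delta>_least: "\<forall>\<beta><\<delta>. \<exists>p\<in>D. \<beta> \<le> last_index p"
  proof (intro allI impI)
    fix \<beta> assume "\<beta> < \<delta>"
    then obtain t where "t \<in> last_index ` D" "\<beta> \<le> t"
      using less_strict_supD unfolding \<delta>_def by blast
    then show "\<exists>p\<in>D. \<beta> \<le> last_index p" by blast
  qed
  have "glue D \<delta> f \<in> Gforce lmb \<kappa> lam"
    by (rule Gforce_glue[OF DG compatible \<delta>_above \<delta>_least \<open>below \<delta> \<lesssim> below lmb\<close>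
          \<open>cf \<delta> \<le> \<kappa>\<close> f])
  moreover have "ext_le (glue D \<delta> f) p" if "p \<in> D" for p
  proof (rule ext_le_glue[OF compatible that])
    have "dom p = {\<beta>. \<beta> \<le> last_index p}" "last_index p < \<delta>"
      using GforceD(2) DG that \<delta>_above by blast+
    then show "dom p \<subseteq> below \<delta>" unfolding below_def by (auto intro: le_less_trans)
  qed
  ultimately show ?thesis by blast
qed

theorem proposition2p9:
  fixes lmb \<kappa> :: "'o::wellorder" and lam :: "'o \<Rightarrow> 'o"
  assumes big: "\<exists>x::'o. below lmb \<prec> below x"
    and sing: "singular_cardinal lmb"
    and cof: "cf lmb = \<kappa>"
    and incr: "\<forall>i j. i < j \<and> j < \<kappa> \<longrightarrow> lam i < lam j"
    and reg: "\<forall>i<\<kappa>. regular_cardinal (lam i)"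
    and bnd: "\<forall>i<\<kappa>. lam i < lmb"
    and conv: "\<forall>x<lmb. \<exists>i<\<kappa>. x < lam i"
  shows "kappa_plus_directed_closed \<kappa> (Gforce lmb \<kappa> lam)"
  unfolding kappa_plus_directed_closed_def
proof (intro allI impI, elim conjE)
  fix D assume DG: "D \<subseteq> Gforce lmb \<kappa> lam" and D_small: "D \<lesssim> below \<kappa>"
    and directed: "\<forall>p\<in>D. \<forall>q\<in>D. \<exists>r\<in>D. ext_le r p \<and> ext_le r q"
  have "\<kappa> < lmb" and inf: "infinite (below lmb)"
    using sing cof unfolding singular_cardinal_def by auto
  obtain x :: 'o where x: "below lmb \<prec> below x" using big by blast
  obtain j where j: "j < \<kappa>" "\<kappa> < lam j" using conv \<open>\<kappa> < lmb\<close> by blast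
  with incr have j_above: "\<forall>i. j \<le> i \<and> i < \<kappa> \<longrightarrow> \<kappa> < lam i" by (metis order_le_less less_trans)
  have tops: "(\<lambda>p. the (p (last_index p))) ` D \<subseteq> (\<Pi>\<^sub>E i\<in>below \<kappa>. below (lam i))"
    using DG GforceD(3)[OF _ order_refl] by blast
  obtain f where f: "f \<in> (\<Pi>\<^sub>E i\<in>below \<kappa>. below (lam i))"
    "\<forall>h\<in>(\<lambda>p. the (p (last_index p))) ` D. lt_star \<kappa> h f"
    using ex_lt_star_upper_bound[OF tops lepoll_trans[OF image_lepoll D_small] reg j(1) j_above]
    by blast
  show "\<exists>r\<in>Gforce lmb \<kappa> lam. \<forall>p\<in>D. ext_le r p"
    by (rule Gforce_lower_bound[OF DG compatible_maps_if_directed[OF directed] D_small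
          \<open>\<kappa> < lmb\<close> inf x f(1)])
      (use f(2) in blast)
qed

end
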